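(* For any probability distribution $P_{XY}$ on finite $\mathcal X\times\mathcal Y$, $\lim_{\alpha\to1^-}U_\alpha(X;Y)=U(X;Y)$ and $\lim_{\alpha\to1^+}U_\alpha(X;Y)=U(X;Y)$.
   Context: $D(P\|Q)=\sum P\log(P/Q)$ ($0\log(0/q)=0$; $+\infty$ if $P\not\ll Q$). For $\alpha\in(0,1)\cup(1,\infty)$, $D_\alpha(P\|Q)=\frac1{\alpha-1}\log\sum_{x:P(x)>0}P(x)^\alpha Q(x)^{1-\alpha}$ ($+\infty$ if $\alpha>1$ and $P\not\ll Q$). With $P_X$ the $X$-marginal: $U(X;Y)=\min_{Q_Y}D(P_X\times Q_Y\|P_{XY})$ and the Rényi umlaut information is $U_\alpha(X;Y)=\min_{Q_Y}D_\alpha(P_X\times Q_Y\|P_{XY})$. *)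

theory Defs
  imports "HOL-Analysis.Analysis"
begin

definition is_dist :: "('a::finite \<Rightarrow> real) \<Rightarrow> bool" where
  "is_dist P \<longleftrightarrow> (\<forall>a. 0 \<le> P a) \<and> (\<Sum>a\<in>UNIV. P a) = 1"

definition abs_cont :: "('a \<Rightarrow> real) \<Rightarrow> ('a \<Rightarrow> real) \<Rightarrow> bool" where
  "abs_cont P Q \<longleftrightarrow> (\<forall>a. 0 < P a \<longrightarrow> 0 < Q a)"

definition kl_div :: "('a::finite \<Rightarrow> real) \<Rightarrow> ('a \<Rightarrow> real) \<Rightarrow> ereal" where
  "kl_div P Q = (if abs_cont P Q
     then ereal (\<Sum>a\<in>{a. 0 < P a}. P a * ln (P a / Q a))
     else \<infinity>)"

text \<open>Renyi divergence of order alpha. For alpha > 1 and P not << Q it is +infinity.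
  If the sum vanishes (only possible for alpha < 1), log 0 = -infinity and
  1/(alpha-1) < 0, so the value is +infinity.\<close>
definition renyi_div :: "real \<Rightarrow> ('a::finite \<Rightarrow> real) \<Rightarrow> ('a \<Rightarrow> real) \<Rightarrow> ereal" where
  "renyi_div \<alpha> P Q =
    (let s = (\<Sum>a\<in>{a. 0 < P a}. P a powr \<alpha> * Q a powr (1 - \<alpha>)) in
     if (1 < \<alpha> \<and> \<not> abs_cont P Q) \<or> s = 0 then \<infinity>
     else ereal (ln s / (\<alpha> - 1)))"

definition marg_X :: "('x::finite \<times> 'y::finite \<Rightarrow> real) \<Rightarrow> 'x \<Rightarrow> real" where
  "marg_X P x = (\<Sum>y\<in>UNIV. P (x, y))"

definition umlaut :: "('x::finite \<times> 'y::finite \<Rightarrow> real) \<Rightarrow> ereal" where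
  "umlaut P = (INF Q\<in>{Q::'y \<Rightarrow> real. is_dist Q}.
      kl_div (\<lambda>(x, y). marg_X P x * Q y) P)"

definition renyi_umlaut :: "real \<Rightarrow> ('x::finite \<times> 'y::finite \<Rightarrow> real) \<Rightarrow> ereal" where
  "renyi_umlaut \<alpha> P = (INF Q\<in>{Q::'y \<Rightarrow> real. is_dist Q}.
      renyi_div \<alpha> (\<lambda>(x, y). marg_X P x * Q y) P)"

end

theory Submission
  imports Defs "HOL-Real_Asymp.Real_Asymp"
begin

(*
  For \<alpha> > 1, Jensen's inequality gives D \<le> D\<^sub>\<alpha>, so U \<le> U\<^sub>\<alpha>. For a fixed Q with
  P\<^sub>X \<times> Q \<ll> P\<^sub>X\<^sub>Y, D\<^sub>\<alpha> = ln (\<Sum> A\<^sup>\<alpha> B\<^sup>1\<^sup>-\<^sup>\<alpha>) / (\<alpha> - 1) is the difference quotient at 1 of a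
  function with derivative D there, so D\<^sub>\<alpha> \<rightarrow> D; hence U\<^sub>\<alpha> eventually drops below any
  bound above U, from both sides.

  The remaining bound, liminf U\<^sub>\<alpha> \<ge> U as \<alpha> \<rightarrow> 1 from below, exchanges the infimum over Q
  with the limit in \<alpha>. For \<alpha> < 1, ln s \<le> s - 1 bounds D\<^sub>\<alpha> from below by the Hellinger
  divergence H\<^sub>\<alpha> = (1 - \<Sum> A\<^sup>\<alpha> B\<^sup>1\<^sup>-\<^sup>\<alpha>) / (1 - \<alpha>), which is continuous in Q, nondecreasing
  in \<alpha> and tends to D (possibly \<infinity>). By compactness of the simplex of Q, as in Dini's
  theorem, a single \<alpha> < 1 makes H\<^sub>\<alpha> exceed any c < U for all Q at once.
*)

lemma sum_over_support:
  fixes A :: "'a::finite \<Rightarrow> real"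
  assumes "\<And>a. 0 \<le> A a" and "\<And>a. A a = 0 \<Longrightarrow> f a = 0"
  shows "(\<Sum>a\<in>{a. 0 < A a}. f a) = (\<Sum>a\<in>UNIV. f a)"
  by (rule sum.mono_neutral_left) (use assms in \<open>auto simp: less_le\<close>)

lemma powr_mult_powr_le_convex_comb:
  fixes a b t :: real
  assumes "0 \<le> a" "0 \<le> b" "0 \<le> t" "t \<le> 1"
  shows "a powr t * b powr (1 - t) \<le> t * a + (1 - t) * b"
  using Youngs_inequality_0[of t "1 - t" a b] assms by (cases "a = 0 \<or> b = 0") auto

lemma compact_mono_family_uniform_gt:
  fixes f :: "'i::linorder \<Rightarrow> 'a::topological_space \<Rightarrow> real"
  assumes "compact K" and "I \<noteq> {}"
    and cont: "\<And>i. i \<in> I \<Longrightarrow> continuous_on K (f i)"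
    and mono: "\<And>i j x. i \<in> I \<Longrightarrow> j \<in> I \<Longrightarrow> i \<le> j \<Longrightarrow> x \<in> K \<Longrightarrow> f i x \<le> f j x"
    and gt: "\<And>x. x \<in> K \<Longrightarrow> \<exists>i\<in>I. c < f i x"
  shows "\<exists>i\<in>I. \<forall>x\<in>K. c < f i x"
proof -
  have "\<exists>U. open U \<and> U \<inter> K = f i -` {c<..} \<inter> K" if "i \<in> I" for i
    using cont[OF that] open_greaterThan by (auto simp: continuous_on_open_invariant)
  then obtain U where U: "\<And>i. i \<in> I \<Longrightarrow> open (U i) \<and> U i \<inter> K = f i -` {c<..} \<inter> K"
    by metis
  have "K \<subseteq> (\<Union>i\<in>I. U i)"
    using gt U by fastforce
  then obtain J where J: "J \<subseteq> I" "finite J" "K \<subseteq> (\<Union>i\<in>J. U i)"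
    using compactE_image[OF \<open>compact K\<close>, of I U] U by blast
  show ?thesis
  proof (cases "J = {}")
    case True
    then show ?thesis using J(3) \<open>I \<noteq> {}\<close> by auto
  next
    case False
    have Max_J: "Max J \<in> I" "\<And>i. i \<in> J \<Longrightarrow> i \<le> Max J"
      using J(1,2) False Max_in by auto
    have "c < f (Max J) x" if "x \<in> K" for x
    proof -
      obtain i where "i \<in> J" "x \<in> U i" using J(3) \<open>x \<in> K\<close> by blast
      then have "c < f i x" using U J(1) \<open>x \<in> K\<close> by blast
      also have "f i x \<le> f (Max J) x"
        using \<open>i \<in> J\<close> J(1) Max_J \<open>x \<in> K\<close> by (intro mono) auto
      finally show ?thesis .
    qed
    then show ?thesis using Max_J(1) by blast
  qed
qed

text \<open>For a distribution A this is (1 - \<Sum>a. A a powr \<alpha> * B a powr (1 - \<alpha>)) / (1 - \<alpha>); the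
  termwise form turns monotonicity in \<alpha> and the limit \<alpha> \<rightarrow> 1 into facts about single summands.\<close>
definition hellinger_div :: "real \<Rightarrow> ('a::finite \<Rightarrow> real) \<Rightarrow> ('a \<Rightarrow> real) \<Rightarrow> real" where
  "hellinger_div \<alpha> A B = (\<Sum>a\<in>UNIV. A a - A a powr \<alpha> * B a powr (1 - \<alpha>)) / (1 - \<alpha>)"

lemma hellinger_div_le_renyi_div:
  assumes "is_dist A" and "\<alpha> < 1"
  shows "ereal (hellinger_div \<alpha> A B) \<le> renyi_div \<alpha> A B"
proof -
  define s where "s = (\<Sum>a\<in>{a. 0 < A a}. A a powr \<alpha> * B a powr (1 - \<alpha>))"
  have A0: "\<And>a. 0 \<le> A a" and sA: "sum A UNIV = 1"
    using assms(1) by (auto simp: is_dist_def)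
  have "s = (\<Sum>a\<in>UNIV. A a powr \<alpha> * B a powr (1 - \<alpha>))"
    unfolding s_def using A0 by (intro sum_over_support) auto
  then have H: "hellinger_div \<alpha> A B = (1 - s) / (1 - \<alpha>)"
    by (simp add: hellinger_div_def sum_subtractf sA)
  show ?thesis
  proof (cases "s = 0")
    case True
    then show ?thesis by (simp add: renyi_div_def s_def[symmetric])
  next
    case False
    moreover have "0 \<le> s" unfolding s_def by (intro sum_nonneg) auto
    ultimately have "ln s \<le> s - 1" by (intro ln_le_minus_one) simp
    then have "(1 - s) / (1 - \<alpha>) \<le> - ln s / (1 - \<alpha>)"
      using assms(2) by (intro divide_right_mono) auto
    also have "\<dots> = ln s / (\<alpha> - 1)"
      by (simp add: divide_simps) (simp add: algebra_simps)
    finally have "(1 - s) / (1 - \<alpha>) \<le> ln s / (\<alpha> - 1)" .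
    then show ?thesis
      using False assms(2) by (simp add: renyi_div_def s_def[symmetric] H)
  qed
qed

lemma kl_div_le_renyi_div:
  assumes "is_dist A" and "1 < \<alpha>"
  shows "kl_div A B \<le> renyi_div \<alpha> A B"
proof (cases "abs_cont A B")
  case False
  then show ?thesis using assms(2) by (simp add: renyi_div_def)
next
  case True
  define S where "S = {a. 0 < A a}"
  define s where "s = (\<Sum>a\<in>S. A a powr \<alpha> * B a powr (1 - \<alpha>))"
  define r where "r = (\<lambda>a. (A a / B a) powr (\<alpha> - 1))"
  have A0: "\<And>a. 0 \<le> A a" and sA: "sum A UNIV = 1"
    using assms(1) by (auto simp: is_dist_def)
  have pos: "0 < A a" "0 < B a" if "a \<in> S" for a
    using that True by (auto simp: S_def abs_cont_def)
  have sAS: "sum A S = 1"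
    unfolding S_def using A0 sA by (subst sum_over_support) auto
  have "r a \<in> {0<..}" if "a \<in> S" for a
    using pos[OF that] by (simp add: r_def)
  then have "(\<Sum>a\<in>S. A a * ln (r a)) \<le> ln (\<Sum>a\<in>S. A a *\<^sub>R r a)"
    using sAS A0 by (intro concave_on_sum[OF _ _ ln_concave]) auto
  moreover have "(\<Sum>a\<in>S. A a * ln (r a)) = (\<alpha> - 1) * (\<Sum>a\<in>S. A a * ln (A a / B a))"
    using pos by (simp add: r_def sum_distrib_left algebra_simps)
  moreover have "A a *\<^sub>R r a = A a powr \<alpha> * B a powr (1 - \<alpha>)" if "a \<in> S" for a
    using pos[OF that] by (simp add: r_def powr_divide powr_diff field_simps)
  then have "(\<Sum>a\<in>S. A a *\<^sub>R r a) = s"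
    unfolding s_def by (rule sum.cong[OF refl])
  ultimately have "(\<Sum>a\<in>S. A a * ln (A a / B a)) \<le> ln s / (\<alpha> - 1)"
    using assms(2) by (simp add: field_simps)
  then show ?thesis
    using True by (simp add: renyi_div_def kl_div_def Let_def s_def S_def)
qed

lemma renyi_div_tendsto_kl_div:
  assumes "is_dist A" and "abs_cont A B"
  shows "((\<lambda>\<alpha>. renyi_div \<alpha> A B) \<longlongrightarrow> kl_div A B) (at 1)"
proof -
  define S where "S = {a. 0 < A a}"
  define K where "K = (\<Sum>a\<in>S. A a * ln (A a / B a))"
  define m where "m = (\<lambda>\<alpha>. \<Sum>a\<in>S. B a * (A a / B a) powr \<alpha>)"
  have A0: "\<And>a. 0 \<le> A a" and sA: "sum A UNIV = 1"
    using assms(1) by (auto simp: is_dist_def)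
  have pos: "0 < A a" "0 < B a" if "a \<in> S" for a
    using that assms(2) by (auto simp: S_def abs_cont_def)
  have sAS: "sum A S = 1"
    unfolding S_def using A0 sA by (subst sum_over_support) auto
  then have "S \<noteq> {}" by auto
  then have m_pos: "0 < m \<alpha>" for \<alpha>
    unfolding m_def by (intro sum_pos mult_pos_pos) (auto dest: pos)
  have weight: "B a * (A a / B a) powr 1 = A a" if "a \<in> S" for a
    using pos[OF that] by simp
  then have "m 1 = sum A S"
    unfolding m_def by (rule sum.cong[OF refl])
  then have m_1: "m 1 = 1" using sAS by simp
  have "A a powr \<alpha> * B a powr (1 - \<alpha>) = B a * (A a / B a) powr \<alpha>" if "a \<in> S" for a \<alpha>
    using pos[OF that] by (simp add: powr_divide powr_diff field_simps)
  then have renyi_sum: "(\<Sum>a\<in>S. A a powr \<alpha> * B a powr (1 - \<alpha>)) = m \<alpha>" for \<alpha>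
    unfolding m_def by (rule sum.cong[OF refl])
  have "(m has_real_derivative (\<Sum>a\<in>S. B a * ((A a / B a) powr 1 * ln (A a / B a)))) (at 1)"
    unfolding m_def by (auto intro!: derivative_eq_intros sum.cong simp: pos)
  moreover have "(\<Sum>a\<in>S. B a * ((A a / B a) powr 1 * ln (A a / B a))) = K"
    unfolding K_def by (intro sum.cong) (simp_all only: weight flip: mult.assoc)
  ultimately have "((\<lambda>\<alpha>. ln (m \<alpha>)) has_real_derivative K) (at 1)"
    using m_pos[of 1] m_1 by (auto intro!: derivative_eq_intros)
  then have "((\<lambda>\<alpha>. (ln (m \<alpha>) - ln (m 1)) / (\<alpha> - 1)) \<longlongrightarrow> K) (at 1)"
    by (simp add: has_field_derivative_iff)
  then have "((\<lambda>\<alpha>. ereal (ln (m \<alpha>) / (\<alpha> - 1))) \<longlongrightarrow> ereal K) (at 1)"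
    using m_1 by (intro tendsto_ereal) simp
  moreover have "renyi_div \<alpha> A B = ereal (ln (m \<alpha>) / (\<alpha> - 1))" for \<alpha>
    using m_pos[of \<alpha>] assms(2) by (simp add: renyi_div_def renyi_sum flip: S_def)
  moreover have "kl_div A B = ereal K"
    using assms(2) by (simp add: kl_div_def K_def S_def)
  ultimately show ?thesis by simp
qed

lemma hellinger_term_mono:
  fixes a b :: real
  assumes "0 \<le> a" "0 \<le> b" "0 \<le> \<alpha>" "\<alpha> \<le> \<beta>" "\<beta> < 1"
  shows "(a - a powr \<alpha> * b powr (1 - \<alpha>)) / (1 - \<alpha>) \<le> (a - a powr \<beta> * b powr (1 - \<beta>)) / (1 - \<beta>)"
proof -
  consider "a = 0" | "0 < a" "b = 0" | "0 < a" "0 < b"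
    using assms by linarith
  then show ?thesis
  proof cases
    case 1
    then show ?thesis by simp
  next
    case 2
    then show ?thesis using assms by (simp add: frac_le)
  next
    case 3
    define x where "x = b / a"
    define g g0 where "g = 1 - \<beta>" and "g0 = 1 - \<alpha>"
    have g: "0 < g" "g \<le> g0" "g0 \<le> 1"
      using assms by (auto simp: g_def g0_def)
    have split: "a powr (1 - h) * b powr h = a * x powr h" for h
      using 3 by (simp add: x_def powr_divide powr_diff field_simps)
    have "(x powr g0) powr (g / g0) * 1 powr (1 - g / g0) \<le> g / g0 * x powr g0 + (1 - g / g0) * 1"
      using g by (intro powr_mult_powr_le_convex_comb) auto
    then have "x powr g - 1 \<le> g / g0 * (x powr g0 - 1)"
      using g by (simp add: powr_powr algebra_simps)
    then have "(1 - x powr g0) / g0 \<le> (1 - x powr g) / g"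
      using g by (simp add: field_simps)
    then have "a * ((1 - x powr g0) / g0) \<le> a * ((1 - x powr g) / g)"
      using 3 by (intro mult_left_mono) auto
    then show ?thesis
      using split[of g] split[of g0] by (simp add: g_def g0_def algebra_simps diff_divide_distrib)
  qed
qed

lemma hellinger_div_mono:
  assumes "\<And>a. 0 \<le> A a" "\<And>a. 0 \<le> B a" "0 \<le> \<alpha>" "\<alpha> \<le> \<beta>" "\<beta> < 1"
  shows "hellinger_div \<alpha> A B \<le> hellinger_div \<beta> A B"
  unfolding hellinger_div_def sum_divide_distrib
  by (intro sum_mono hellinger_term_mono) (use assms in auto)

lemma continuous_on_hellinger_div:
  assumes "0 < \<alpha>" "\<alpha> < 1" "\<And>a. continuous_on K (\<lambda>v. A v a)" "\<And>v a. v \<in> K \<Longrightarrow> 0 \<le> A v a"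
  shows "continuous_on K (\<lambda>v. hellinger_div \<alpha> (A v) B)"
  unfolding hellinger_div_def
  by (intro continuous_on_divide continuous_on_sum continuous_on_diff continuous_on_mult
      continuous_on_powr' continuous_on_const assms) (use assms in auto)

lemma hellinger_term_tendsto:
  fixes a b :: real
  assumes "0 < a" "0 < b"
  shows "((\<lambda>\<alpha>. (a - a powr \<alpha> * b powr (1 - \<alpha>)) / (1 - \<alpha>)) \<longlongrightarrow> a * ln (a / b)) (at 1)"
proof -
  define h where "h = (\<lambda>\<alpha>. a powr \<alpha> * b powr (1 - \<alpha>))"
  have "(h has_real_derivative a * ln a - a * ln b) (at 1)"
    unfolding h_def using assms by (auto intro!: derivative_eq_intros)
  then have "((\<lambda>\<alpha>. (h \<alpha> - h 1) / (\<alpha> - 1)) \<longlongrightarrow> a * ln a - a * ln b) (at 1)"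
    by (simp add: has_field_derivative_iff)
  moreover have "(h \<alpha> - h 1) / (\<alpha> - 1) = (a - a powr \<alpha> * b powr (1 - \<alpha>)) / (1 - \<alpha>)" for \<alpha>
    using assms by (simp add: h_def divide_simps) (simp add: algebra_simps)
  ultimately show ?thesis
    using assms by (simp add: ln_div algebra_simps)
qed

lemma hellinger_div_ge_singular_mass:
  assumes "is_dist A" "is_dist B" "B a0 = 0" "0 \<le> \<alpha>" "\<alpha> < 1"
  shows "\<alpha> * A a0 / (1 - \<alpha>) \<le> hellinger_div \<alpha> A B"
proof -
  define t where "t = (\<lambda>a. A a - A a powr \<alpha> * B a powr (1 - \<alpha>))"
  have A0: "\<And>a. 0 \<le> A a" and sA: "sum A UNIV = 1" and B0: "\<And>a. 0 \<le> B a" and sB: "sum B UNIV = 1"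
    using assms(1,2) by (auto simp: is_dist_def)
  have slack: "0 \<le> t a - (1 - \<alpha>) * (A a - B a)" for a
    using powr_mult_powr_le_convex_comb[of "A a" "B a" \<alpha>] A0 B0 assms(4,5)
    by (simp add: t_def algebra_simps)
  have "sum t UNIV = (\<Sum>a\<in>UNIV. t a - (1 - \<alpha>) * (A a - B a))"
    by (simp add: sum_subtractf sum_distrib_left[symmetric] sA sB)
  also have "\<dots> \<ge> t a0 - (1 - \<alpha>) * (A a0 - B a0)"
    using slack by (intro member_le_sum) auto
  finally have "\<alpha> * A a0 \<le> sum t UNIV"
    using assms(3,5) by (simp add: t_def algebra_simps)
  then show ?thesis
    using assms(5) by (simp add: hellinger_div_def t_def divide_right_mono)
qed

lemma hellinger_div_tendsto_kl_div:
  assumes "is_dist A" "is_dist B"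
  shows "((\<lambda>\<alpha>. ereal (hellinger_div \<alpha> A B)) \<longlongrightarrow> kl_div A B) (at_left 1)"
proof (cases "abs_cont A B")
  case True
  define S where "S = {a. 0 < A a}"
  have A0: "\<And>a. 0 \<le> A a" using assms(1) by (auto simp: is_dist_def)
  have "hellinger_div \<alpha> A B = (\<Sum>a\<in>S. (A a - A a powr \<alpha> * B a powr (1 - \<alpha>)) / (1 - \<alpha>))" for \<alpha>
    unfolding hellinger_div_def sum_divide_distrib S_def using A0 by (subst sum_over_support) auto
  moreover have "((\<lambda>\<alpha>. \<Sum>a\<in>S. (A a - A a powr \<alpha> * B a powr (1 - \<alpha>)) / (1 - \<alpha>))
      \<longlongrightarrow> (\<Sum>a\<in>S. A a * ln (A a / B a))) (at 1)"
    using True by (intro tendsto_sum hellinger_term_tendsto) (auto simp: S_def abs_cont_def)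
  ultimately have "((\<lambda>\<alpha>. ereal (hellinger_div \<alpha> A B)) \<longlongrightarrow> kl_div A B) (at 1)"
    using True by (simp add: kl_div_def S_def)
  then show ?thesis by (simp add: filterlim_at_split)
next
  case False
  then obtain a0 where a0: "0 < A a0" "B a0 = 0"
    using assms(2) by (auto simp: abs_cont_def is_dist_def less_le)
  have "LIM \<alpha> at_left 1. \<alpha> * A a0 / (1 - \<alpha>) :> at_top"
    using a0(1) by real_asymp
  moreover have "eventually (\<lambda>\<alpha>. \<alpha> * A a0 / (1 - \<alpha>) \<le> hellinger_div \<alpha> A B) (at_left 1)"
    unfolding eventually_at_left_field
    using hellinger_div_ge_singular_mass[OF assms a0(2)] by (intro exI[of _ 0]) auto
  ultimately have "LIM \<alpha> at_left 1. hellinger_div \<alpha> A B :> at_top"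
    by (rule filterlim_at_top_mono)
  then show ?thesis
    using False by (simp add: kl_div_def tendsto_PInfty_eq_at_top)
qed

lemma is_dist_marg_X:
  assumes "is_dist P"
  shows "is_dist (marg_X P)"
proof -
  have "sum (marg_X P) UNIV = sum P (UNIV \<times> UNIV)"
    unfolding marg_X_def by (simp add: sum.cartesian_product)
  then show ?thesis
    using assms by (auto simp: is_dist_def marg_X_def UNIV_Times_UNIV intro: sum_nonneg)
qed

lemma is_dist_prod:
  assumes "is_dist A" and "is_dist B"
  shows "is_dist (\<lambda>(x, y). A x * B y)"
proof -
  have "(\<Sum>p\<in>UNIV. case p of (x, y) \<Rightarrow> A x * B y) = (\<Sum>x\<in>UNIV. \<Sum>y\<in>UNIV. A x * B y)"
    by (simp flip: UNIV_Times_UNIV add: sum.cartesian_product)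
  then show ?thesis
    using assms by (auto simp: is_dist_def sum_product[symmetric])
qed

text \<open>Distributions on a finite type as vectors, to use the topology of real^'n.\<close>
definition prob_simplex :: "(real^'n) set" where
  "prob_simplex = {v. is_dist (vec_nth v)}"

lemma compact_prob_simplex: "compact prob_simplex"
proof -
  have "closed (prob_simplex :: (real^'n) set)"
    unfolding prob_simplex_def is_dist_def
    by (intro closed_Collect_conj closed_Collect_all closed_Collect_le closed_Collect_eq continuous_intros)
  moreover have "norm v \<le> 1" if "v \<in> prob_simplex" for v :: "real^'n"
    using that norm_le_l1_cart[of v] by (simp add: prob_simplex_def is_dist_def)
  then have "bounded (prob_simplex :: (real^'n) set)"
    by (auto simp: bounded_iff)
  ultimately show ?thesis by (simp add: compact_eq_bounded_closed)
qed

lemma uniform_hellinger_div_gt: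
  fixes P :: "'x::finite \<times> 'y::finite \<Rightarrow> real"
  assumes "is_dist P" and "ereal c < umlaut P"
  obtains \<alpha> where "0 < \<alpha>" "\<alpha> < 1"
    "\<And>Q. is_dist Q \<Longrightarrow> c < hellinger_div \<alpha> (\<lambda>(x, y). marg_X P x * Q y) P"
proof -
  define f where "f = (\<lambda>\<alpha> (v::real^'y). hellinger_div \<alpha> (\<lambda>(x, y). marg_X P x * v$y) P)"
  have m0: "\<And>x. 0 \<le> marg_X P x" and P0: "\<And>a. 0 \<le> P a"
    using is_dist_marg_X[OF assms(1)] assms(1) by (auto simp: is_dist_def)
  have "continuous_on prob_simplex (f \<alpha>)" if "\<alpha> \<in> {0<..<1}" for \<alpha>
    unfolding f_def using that m0
    by (intro continuous_on_hellinger_div) (auto simp: case_prod_beta prob_simplex_def is_dist_def intro!: continuous_intros)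
  moreover have "f \<alpha> v \<le> f \<beta> v"
    if "\<alpha> \<in> {0<..<1}" "\<beta> \<in> {0<..<1}" "\<alpha> \<le> \<beta>" "v \<in> prob_simplex" for \<alpha> \<beta> v
    using that m0 P0 unfolding f_def prob_simplex_def is_dist_def
    by (intro hellinger_div_mono) auto
  moreover have "\<exists>\<alpha>\<in>{0<..<1}. c < f \<alpha> v" if "v \<in> prob_simplex" for v
  proof -
    have "is_dist (vec_nth v)" using that by (simp add: prob_simplex_def)
    then have dist: "is_dist (\<lambda>(x, y). marg_X P x * v$y)"
      by (rule is_dist_prod[OF is_dist_marg_X[OF assms(1)]])
    have "umlaut P \<le> kl_div (\<lambda>(x, y). marg_X P x * v$y) P"
      unfolding umlaut_def using \<open>is_dist (vec_nth v)\<close> by (intro INF_lower) simp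
    then have "eventually (\<lambda>\<alpha>. ereal c < ereal (f \<alpha> v)) (at_left 1)"
      unfolding f_def using assms(2)
      by (intro order_tendstoD(1)[OF hellinger_div_tendsto_kl_div[OF dist assms(1)]]) simp
    then obtain b where "b < 1" "\<And>\<alpha>. b < \<alpha> \<Longrightarrow> \<alpha> < 1 \<Longrightarrow> c < f \<alpha> v"
      by (auto simp: eventually_at_left_field)
    then show ?thesis
      by (intro bexI[of _ "(max b 0 + 1) / 2"]) auto
  qed
  ultimately obtain \<alpha> where "\<alpha> \<in> {0<..<1}" "\<forall>v\<in>prob_simplex. c < f \<alpha> v"
    using compact_mono_family_uniform_gt[OF compact_prob_simplex, of "{0<..<1}" f c] by auto
  moreover have "(\<chi> y. Q y) \<in> prob_simplex" if "is_dist Q" for Q :: "'y \<Rightarrow> real"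
    using that by (simp add: prob_simplex_def vec_lambda_inverse)
  ultimately show ?thesis
    using that by (force simp: f_def)
qed

lemma eventually_renyi_umlaut_less:
  fixes P :: "'x::finite \<times> 'y::finite \<Rightarrow> real"
  assumes "is_dist P" and "umlaut P < a"
  shows "eventually (\<lambda>\<alpha>. renyi_umlaut \<alpha> P < a) (at 1)"
proof -
  obtain Q where Q: "is_dist Q" "kl_div (\<lambda>(x, y). marg_X P x * Q y) P < a"
    using assms(2) by (auto simp: umlaut_def INF_less_iff)
  then have "abs_cont (\<lambda>(x, y). marg_X P x * Q y) P"
    by (auto simp: kl_div_def split: if_splits)
  then have "eventually (\<lambda>\<alpha>. renyi_div \<alpha> (\<lambda>(x, y). marg_X P x * Q y) P < a) (at 1)"
    using Q is_dist_prod[OF is_dist_marg_X[OF assms(1)] Q(1)]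
    by (intro order_tendstoD(2)[OF renyi_div_tendsto_kl_div])
  then show ?thesis
    by (rule eventually_mono) (use Q(1) in \<open>auto simp: renyi_umlaut_def intro: le_less_trans[OF INF_lower]\<close>)
qed

lemma umlaut_le_renyi_umlaut:
  fixes P :: "'x::finite \<times> 'y::finite \<Rightarrow> real"
  assumes "is_dist P" and "1 < \<alpha>"
  shows "umlaut P \<le> renyi_umlaut \<alpha> P"
  unfolding umlaut_def renyi_umlaut_def
  using assms is_dist_prod[OF is_dist_marg_X[OF assms(1)]]
  by (intro INF_mono) (blast intro: kl_div_le_renyi_div)

lemma eventually_renyi_umlaut_greater_at_left:
  fixes P :: "'x::finite \<times> 'y::finite \<Rightarrow> real"
  assumes "is_dist P" and "a < umlaut P"
  shows "eventually (\<lambda>\<alpha>. a < renyi_umlaut \<alpha> P) (at_left 1)"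
proof -
  obtain c where c: "a < ereal c" "ereal c < umlaut P"
    using ereal_dense2[OF assms(2)] by blast
  obtain \<alpha>0 where \<alpha>0: "0 < \<alpha>0" "\<alpha>0 < 1"
    and H: "\<And>Q. is_dist Q \<Longrightarrow> c < hellinger_div \<alpha>0 (\<lambda>(x, y). marg_X P x * Q y) P"
    using uniform_hellinger_div_gt[OF assms(1) c(2)] by blast
  have "ereal c \<le> renyi_umlaut \<alpha> P" if "\<alpha>0 < \<alpha>" "\<alpha> < 1" for \<alpha>
    unfolding renyi_umlaut_def
  proof (rule INF_greatest)
    fix Q :: "'y \<Rightarrow> real" assume "Q \<in> {Q. is_dist Q}"
    then have dist: "is_dist (\<lambda>(x, y). marg_X P x * Q y)"
      using is_dist_prod[OF is_dist_marg_X[OF assms(1)]] by auto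
    have "c < hellinger_div \<alpha>0 (\<lambda>(x, y). marg_X P x * Q y) P"
      using H \<open>Q \<in> {Q. is_dist Q}\<close> by auto
    also have "hellinger_div \<alpha>0 (\<lambda>(x, y). marg_X P x * Q y) P \<le> hellinger_div \<alpha> (\<lambda>(x, y). marg_X P x * Q y) P"
      using dist assms(1) \<alpha>0 that by (intro hellinger_div_mono) (auto simp: is_dist_def)
    finally have "ereal c \<le> ereal (hellinger_div \<alpha> (\<lambda>(x, y). marg_X P x * Q y) P)"
      by simp
    also have "\<dots> \<le> renyi_div \<alpha> (\<lambda>(x, y). marg_X P x * Q y) P"
      using dist that by (intro hellinger_div_le_renyi_div)
    finally show "ereal c \<le> renyi_div \<alpha> (\<lambda>(x, y). marg_X P x * Q y) P" .
  qed
  then show ?thesis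
    unfolding eventually_at_left_field using c(1) \<alpha>0 by (intro exI[of _ \<alpha>0]) (auto intro: less_le_trans)
qed

theorem mainTheorem11:
  fixes P :: "'x::finite \<times> 'y::finite \<Rightarrow> real"
  assumes "is_dist P"
  shows "((\<lambda>\<alpha>. renyi_umlaut \<alpha> P) \<longlongrightarrow> umlaut P) (at_left 1) \<and>
         ((\<lambda>\<alpha>. renyi_umlaut \<alpha> P) \<longlongrightarrow> umlaut P) (at_right 1)"
proof -
  have above: "eventually (\<lambda>\<alpha>. renyi_umlaut \<alpha> P < a) (at_left 1)"
      "eventually (\<lambda>\<alpha>. renyi_umlaut \<alpha> P < a) (at_right 1)" if "umlaut P < a" for a
    using eventually_renyi_umlaut_less[OF assms that] by (simp_all add: eventually_at_split)
  have below_right: "eventually (\<lambda>\<alpha>. a < renyi_umlaut \<alpha> P) (at_right 1)" if "a < umlaut P" for a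
    unfolding eventually_at_right_field using that umlaut_le_renyi_umlaut[OF assms]
    by (intro exI[of _ 2]) (auto intro: less_le_trans)
  show ?thesis
    using above below_right eventually_renyi_umlaut_greater_at_left[OF assms]
    by (simp add: order_tendsto_iff)
qed

end
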